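(* The one-dimensional subalgebras of ${\rm S}_2$ are exactly $\langle e_1\rangle$, $\langle e_2\rangle$ and $\langle e_1+\alpha e_2\pm e_3\rangle$ ($\alpha\in\mathbb{C}$). Up to automorphisms of ${\rm S}_2$, every one-dimensional subalgebra is equivalent to one of $\langle e_1\rangle$, $\langle e_2\rangle$, $\langle e_1+e_3\rangle$, $\langle e_1-e_3\rangle$.
   Context: ${\rm S}_2$ is the complex algebra with basis $e_1,e_2,e_3$, unit $e_1$ ($e_1e_i=e_ie_1=e_i$), $e_2e_3=e_2$, $e_3e_2=-e_2$, $e_3e_3=e_1$; all other products of basis elements are zero (involution $\overline{e_1}=e_1$, $\overline{e_2}=-e_2$, $\overline{e_3}=-e_3$, which plays no role here). A subalgebra is a linear subspace closed under multiplication (it need not contain $e_1$). Equivalence up to automorphisms means one is mapped onto the other by an algebra automorphism. $\langle S\rangle$ denotes linear span. *)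

theory Defs
  imports Complex_Main
begin

text \<open>Elements of S2 are coordinate triples (a,b,c) = a e1 + b e2 + c e3 over the complex numbers.\<close>

type_synonym S2 = "complex \<times> complex \<times> complex"

definition e1 :: S2 where "e1 = (1, 0, 0)"
definition e2 :: S2 where "e2 = (0, 1, 0)"
definition e3 :: S2 where "e3 = (0, 0, 1)"

definition s2add :: "S2 \<Rightarrow> S2 \<Rightarrow> S2" where
  "s2add x y = (fst x + fst y, fst (snd x) + fst (snd y), snd (snd x) + snd (snd y))"

definition s2scale :: "complex \<Rightarrow> S2 \<Rightarrow> S2" where
  "s2scale c x = (c * fst x, c * fst (snd x), c * snd (snd x))"

text \<open>Bilinear extension of the multiplication table:
  e1 unit, e2 e3 = e2, e3 e2 = -e2, e3 e3 = e1, all other products zero.\<close>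
definition s2mult :: "S2 \<Rightarrow> S2 \<Rightarrow> S2" where
  "s2mult x y = (let (a1, a2, a3) = x; (b1, b2, b3) = y in
     (a1 * b1 + a3 * b3,
      a1 * b2 + a2 * b1 + a2 * b3 - a3 * b2,
      a1 * b3 + a3 * b1))"

definition s2subspace :: "S2 set \<Rightarrow> bool" where
  "s2subspace V \<longleftrightarrow> (0, 0, 0) \<in> V \<and> (\<forall>x\<in>V. \<forall>y\<in>V. s2add x y \<in> V)
      \<and> (\<forall>c. \<forall>x\<in>V. s2scale c x \<in> V)"

definition s2subalgebra :: "S2 set \<Rightarrow> bool" where
  "s2subalgebra V \<longleftrightarrow> s2subspace V \<and> (\<forall>x\<in>V. \<forall>y\<in>V. s2mult x y \<in> V)"

definition s2span1 :: "S2 \<Rightarrow> S2 set" where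
  "s2span1 v = {s2scale c v | c. True}"

definition s2dim1 :: "S2 set \<Rightarrow> bool" where
  "s2dim1 V \<longleftrightarrow> (\<exists>v. v \<noteq> (0, 0, 0) \<and> V = s2span1 v)"

definition s2automorphism :: "(S2 \<Rightarrow> S2) \<Rightarrow> bool" where
  "s2automorphism f \<longleftrightarrow> bij f
     \<and> (\<forall>x y. f (s2add x y) = s2add (f x) (f y))
     \<and> (\<forall>c x. f (s2scale c x) = s2scale c (f x))
     \<and> (\<forall>x y. f (s2mult x y) = s2mult (f x) (f y))"

end

theory Submission
  imports Defs
begin

text \<open>A line \<open>\<langle>v\<rangle>\<close> is a subalgebra iff \<open>v\<^sup>2 \<in> \<langle>v\<rangle>\<close>. For \<open>v = (a, b, c)\<close> one has
  \<open>v\<^sup>2 = (a\<^sup>2 + c\<^sup>2, 2ab, 2ac)\<close>, and proportionality to \<open>v\<close> forces \<open>a = c = 0\<close>, or \<open>b = c = 0\<close>,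
  or \<open>c = \<plusminus>a \<noteq> 0\<close>. The shear \<open>e\<^sub>3 \<mapsto> e\<^sub>3 + \<beta> e\<^sub>2\<close> fixing \<open>e\<^sub>1, e\<^sub>2\<close> is an automorphism, and a
  suitable \<open>\<beta>\<close> removes the \<open>e\<^sub>2\<close>-component of \<open>e\<^sub>1 + \<alpha> e\<^sub>2 \<plusminus> e\<^sub>3\<close>.\<close>

definition s2gen_plus :: "complex \<Rightarrow> S2" where
  "s2gen_plus \<alpha> = s2add (s2add e1 (s2scale \<alpha> e2)) e3"

definition s2gen_minus :: "complex \<Rightarrow> S2" where
  "s2gen_minus \<alpha> = s2add (s2add e1 (s2scale \<alpha> e2)) (s2scale (-1) e3)"

lemma s2span1_iff: "x \<in> s2span1 v \<longleftrightarrow> (\<exists>c. x = s2scale c v)"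
  by (auto simp: s2span1_def)

lemma s2span1_eq_range: "s2span1 v = range (\<lambda>c. s2scale c v)"
  by (auto simp: s2span1_def)

lemma s2scale_in_s2span1: "s2scale c v \<in> s2span1 v"
  by (auto simp: s2span1_def)

lemma Ball_s2span1: "(\<forall>x\<in>s2span1 v. P x) \<longleftrightarrow> (\<forall>c. P (s2scale c v))"
  unfolding s2span1_def by blast

lemma s2scale_s2scale: "s2scale c (s2scale k v) = s2scale (c * k) v"
  by (simp add: s2scale_def mult.assoc)

lemma s2scale_one: "s2scale 1 v = v"
  by (simp add: s2scale_def)

lemma s2add_s2scale: "s2add (s2scale c w) (s2scale d w) = s2scale (c + d) w"
  by (simp add: s2add_def s2scale_def distrib_right)

lemma s2mult_s2scale: "s2mult (s2scale c x) (s2scale d y) = s2scale (c * d) (s2mult x y)"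
  by (cases x, cases y) (simp add: s2mult_def s2scale_def algebra_simps)

lemma s2span1_s2scale:
  assumes "k \<noteq> 0"
  shows "s2span1 (s2scale k v) = s2span1 v"
proof
  show "s2span1 (s2scale k v) \<subseteq> s2span1 v"
    by (auto simp: s2span1_iff s2scale_s2scale)
  show "s2span1 v \<subseteq> s2span1 (s2scale k v)"
  proof
    fix x assume "x \<in> s2span1 v"
    then obtain c where "x = s2scale c v" by (auto simp: s2span1_iff)
    then have "x = s2scale (c / k) (s2scale k v)"
      using assms by (simp add: s2scale_s2scale)
    then show "x \<in> s2span1 (s2scale k v)" by (auto simp: s2span1_iff)
  qed
qed

lemma s2subalgebra_s2span1_iff:
  "s2subalgebra (s2span1 w) \<longleftrightarrow> (\<exists>\<mu>. s2mult w w = s2scale \<mu> w)"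
proof
  assume "s2subalgebra (s2span1 w)"
  then have "s2mult (s2scale 1 w) (s2scale 1 w) \<in> s2span1 w"
    by (auto simp: s2subalgebra_def Ball_s2span1)
  then show "\<exists>\<mu>. s2mult w w = s2scale \<mu> w"
    by (simp add: s2span1_iff s2scale_one)
next
  assume "\<exists>\<mu>. s2mult w w = s2scale \<mu> w"
  then obtain \<mu> where \<mu>: "s2mult w w = s2scale \<mu> w" ..
  have "(0, 0, 0) = s2scale 0 w"
    by (simp add: s2scale_def)
  then show "s2subalgebra (s2span1 w)"
    unfolding s2subalgebra_def s2subspace_def Ball_s2span1
    by (simp add: s2add_s2scale s2scale_s2scale s2mult_s2scale \<mu> s2scale_in_s2span1)
qed

lemma s2dim1_s2span1: "w \<noteq> (0, 0, 0) \<Longrightarrow> s2dim1 (s2span1 w)"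
  unfolding s2dim1_def by blast

lemma s2square_proportional_cases:
  assumes "v \<noteq> (0, 0, 0)" and "s2mult v v = s2scale l v"
  obtains k where "k \<noteq> 0" and "v = s2scale k e1"
    | k where "k \<noteq> 0" and "v = s2scale k e2"
    | k \<alpha> where "k \<noteq> 0" and "v = s2scale k (s2gen_plus \<alpha>)"
    | k \<alpha> where "k \<noteq> 0" and "v = s2scale k (s2gen_minus \<alpha>)"
proof -
  obtain a b c where v: "v = (a, b, c)" by (cases v)
  have sq1: "a * a + c * c = l * a" and sq2: "2 * a * b = l * b" and sq3: "2 * a * c = l * c"
    using assms(2) by (auto simp: v s2mult_def s2scale_def algebra_simps)
  consider "a = 0" | "a \<noteq> 0" "c = 0" | "a \<noteq> 0" "c \<noteq> 0" by blast
  then show thesis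
  proof cases
    case 1
    with sq1 have "c = 0" by simp
    with 1 assms(1) have "b \<noteq> 0" and "v = s2scale b e2"
      by (auto simp: v s2scale_def e2_def)
    then show thesis by (rule that(2))
  next
    case 2
    with sq1 have "l = a" by simp
    with 2 sq2 have "b = 0" by (simp add: algebra_simps)
    with 2 have "v = s2scale a e1" by (simp add: v s2scale_def e1_def)
    with 2 show thesis by (intro that(1))
  next
    case 3
    with sq3 have "l = 2 * a" by simp
    with sq1 have "(c - a) * (c + a) = 0" by (simp add: algebra_simps)
    then consider "c = a" | "c = - a" by (auto simp: eq_neg_iff_add_eq_0)
    then show thesis
    proof cases
      case 1
      with 3 have "v = s2scale a (s2gen_plus (b / a))"
        by (simp add: v s2gen_plus_def s2scale_def s2add_def e1_def e2_def e3_def)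
      with 3 show thesis by (intro that(3))
    next
      case 2
      with 3 have "v = s2scale a (s2gen_minus (b / a))"
        by (simp add: v s2gen_minus_def s2scale_def s2add_def e1_def e2_def e3_def)
      with 3 show thesis by (intro that(4))
    qed
  qed
qed

lemma s2square_s2gen:
  "s2mult e1 e1 = s2scale 1 e1" "s2mult e2 e2 = s2scale 0 e2"
  "s2mult (s2gen_plus \<alpha>) (s2gen_plus \<alpha>) = s2scale 2 (s2gen_plus \<alpha>)"
  "s2mult (s2gen_minus \<alpha>) (s2gen_minus \<alpha>) = s2scale 2 (s2gen_minus \<alpha>)"
  by (simp_all add: s2gen_plus_def s2gen_minus_def e1_def e2_def e3_def
      s2add_def s2mult_def s2scale_def)

lemma s2gen_nonzero:
  "e1 \<noteq> (0, 0, 0)" "e2 \<noteq> (0, 0, 0)"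
  "s2gen_plus \<alpha> \<noteq> (0, 0, 0)" "s2gen_minus \<alpha> \<noteq> (0, 0, 0)"
  by (simp_all add: s2gen_plus_def s2gen_minus_def e1_def e2_def e3_def s2add_def s2scale_def)

lemma one_dim_s2subalgebra_iff:
  "s2subalgebra V \<and> s2dim1 V \<longleftrightarrow>
     V = s2span1 e1 \<or> V = s2span1 e2 \<or>
     (\<exists>\<alpha>. V = s2span1 (s2gen_plus \<alpha>) \<or> V = s2span1 (s2gen_minus \<alpha>))"
proof
  assume V: "s2subalgebra V \<and> s2dim1 V"
  then obtain v where v: "v \<noteq> (0, 0, 0)" "V = s2span1 v"
    by (auto simp: s2dim1_def)
  with V obtain l where "s2mult v v = s2scale l v"
    by (auto simp: s2subalgebra_s2span1_iff)
  from s2square_proportional_cases[OF v(1) this] v(2) show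
    "V = s2span1 e1 \<or> V = s2span1 e2 \<or>
     (\<exists>\<alpha>. V = s2span1 (s2gen_plus \<alpha>) \<or> V = s2span1 (s2gen_minus \<alpha>))"
    by cases (auto simp: s2span1_s2scale)
next
  assume "V = s2span1 e1 \<or> V = s2span1 e2 \<or>
     (\<exists>\<alpha>. V = s2span1 (s2gen_plus \<alpha>) \<or> V = s2span1 (s2gen_minus \<alpha>))"
  then show "s2subalgebra V \<and> s2dim1 V"
    using s2square_s2gen s2gen_nonzero
    by (auto simp: s2subalgebra_s2span1_iff intro: s2dim1_s2span1)
qed

definition s2shear :: "complex \<Rightarrow> S2 \<Rightarrow> S2" where
  "s2shear \<beta> x = (fst x, fst (snd x) + \<beta> * snd (snd x), snd (snd x))"

lemma s2automorphism_s2shear: "s2automorphism (s2shear \<beta>)"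
proof -
  have "s2shear (- \<beta>) \<circ> s2shear \<beta> = id" "s2shear \<beta> \<circ> s2shear (- \<beta>) = id"
    by (auto simp: s2shear_def)
  then have "bij (s2shear \<beta>)"
    by (rule o_bij)
  moreover have "s2shear \<beta> (s2add x y) = s2add (s2shear \<beta> x) (s2shear \<beta> y)" for x y
    by (simp add: s2shear_def s2add_def algebra_simps)
  moreover have "s2shear \<beta> (s2scale c x) = s2scale c (s2shear \<beta> x)" for c x
    by (simp add: s2shear_def s2scale_def algebra_simps)
  moreover have "s2shear \<beta> (s2mult x y) = s2mult (s2shear \<beta> x) (s2shear \<beta> y)" for x y
    by (cases x, cases y) (simp add: s2shear_def s2mult_def algebra_simps)
  ultimately show ?thesis
    unfolding s2automorphism_def by blast
qed

lemma s2shear_s2gen: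
  "s2shear (- \<alpha>) (s2gen_plus \<alpha>) = s2add e1 e3"
  "s2shear \<alpha> (s2gen_minus \<alpha>) = s2add e1 (s2scale (-1) e3)"
  by (simp_all add: s2shear_def s2gen_plus_def s2gen_minus_def e1_def e2_def e3_def
      s2add_def s2scale_def)

lemma s2automorphism_image_s2span1:
  assumes "s2automorphism f"
  shows "f ` s2span1 v = s2span1 (f v)"
proof -
  have "f (s2scale c v) = s2scale c (f v)" for c
    using assms unfolding s2automorphism_def by blast
  then show ?thesis
    unfolding s2span1_eq_range image_image by simp
qed

lemma s2automorphism_id: "s2automorphism id"
  by (simp add: s2automorphism_def)

theorem mainTheorem16:
  shows "(\<forall>V. (s2subalgebra V \<and> s2dim1 V) \<longleftrightarrow>
            (V = s2span1 e1 \<or> V = s2span1 e2 \<or>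
             (\<exists>\<alpha>. V = s2span1 (s2add (s2add e1 (s2scale \<alpha> e2)) e3)
                 \<or> V = s2span1 (s2add (s2add e1 (s2scale \<alpha> e2)) (s2scale (-1) e3)))))
       \<and> (\<forall>V. s2subalgebra V \<and> s2dim1 V \<longrightarrow>
            (\<exists>f. s2automorphism f \<and>
               (f ` V = s2span1 e1 \<or> f ` V = s2span1 e2 \<or>
                f ` V = s2span1 (s2add e1 e3) \<or> f ` V = s2span1 (s2add e1 (s2scale (-1) e3)))))"
proof -
  have normal_form: "\<exists>f. s2automorphism f \<and>
               (f ` V = s2span1 e1 \<or> f ` V = s2span1 e2 \<or>
                f ` V = s2span1 (s2add e1 e3) \<or> f ` V = s2span1 (s2add e1 (s2scale (-1) e3)))"
    if "s2subalgebra V \<and> s2dim1 V" for V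
    using that unfolding one_dim_s2subalgebra_iff
  proof (elim disjE exE)
    fix \<alpha> assume "V = s2span1 (s2gen_plus \<alpha>)"
    then show ?thesis
      by (metis s2automorphism_s2shear s2automorphism_image_s2span1 s2shear_s2gen(1))
  next
    fix \<alpha> assume "V = s2span1 (s2gen_minus \<alpha>)"
    then show ?thesis
      by (metis s2automorphism_s2shear s2automorphism_image_s2span1 s2shear_s2gen(2))
  qed (use s2automorphism_id in force)+
  show ?thesis
    using one_dim_s2subalgebra_iff normal_form
    unfolding s2gen_plus_def s2gen_minus_def by blast
qed

end
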